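(* Let $\Gamma\subset\mathbb{N}$ be a numerical semigroup of multiplicity (smallest nonzero element) at least $3$, with set of gaps $L=\mathbb{N}\setminus\Gamma$ and genus $\delta=|L|$, and let $\mathcal{O}=\k[\Gamma]$ be the ring of the monomial curve. Then for every $k\ge1$ \[d_k=\dim_\k\operatorname{Coker}\big(\operatorname{Hom}_{\mathcal{O}}(\omega^{\otimes k},\mathcal{O})\to\mathcal{O}\big)=|(k+1)L|+(2k+1)-\delta.\] Consequently $d_k>2k\delta$ if and only if $|(k+1)L|>(2k+1)(\delta-1)$.
   Context: Ground field $\k$ algebraically closed, characteristic $0$. $\k[\Gamma]=\bigoplus_{a\in\Gamma}\k t^a\subset K=\k((t))$ (or its localisation/completion). $(k+1)L$ denotes the sumset $L+\dots+L$ ($k+1$ summands) and $|\cdot|$ its cardinality. The dualising module is embedded in $K$ via $dt\mapsto 1$, giving the fractional ideal $\omega$ spanned by $\k[[t]]$ and the monomials $t^{-\ell-1}$, $\ell\in L$. The invariant $d_k$ is $\dim_\k\mathcal{O}/(\mathcal{O}:_K\omega^k)$, where $\omega^k$ is the $k$-th power of this fractional ideal and $\mathcal{O}:_K\omega^k=\{x\in K: x\omega^k\subset\mathcal{O}\}$ (the image of $\operatorname{Hom}(\omega^{\otimes k},\mathcal{O})$ in $\mathcal{O}$). *)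

theory Defs
  imports "HOL-Computational_Algebra.Polynomial" "HOL-Computational_Algebra.Formal_Laurent_Series"
begin

definition alg_closed :: "'a::field itself \<Rightarrow> bool" where
  "alg_closed _ \<longleftrightarrow> (\<forall>p::'a poly. degree p > 0 \<longrightarrow> (\<exists>x. poly p x = 0))"

definition numerical_semigroup :: "nat set \<Rightarrow> bool" where
  "numerical_semigroup G \<longleftrightarrow> 0 \<in> G \<and> (\<forall>a\<in>G. \<forall>b\<in>G. a + b \<in> G) \<and> finite (UNIV - G)"

definition multiplicity :: "nat set \<Rightarrow> nat" where
  "multiplicity G = (LEAST m. m \<in> G \<and> m > 0)"

definition gaps :: "nat set \<Rightarrow> nat set" where
  "gaps G = UNIV - G"

fun sumset :: "nat \<Rightarrow> nat set \<Rightarrow> nat set" where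
  "sumset 0 A = {0}"
| "sumset (Suc n) A = {a + b | a b. a \<in> A \<and> b \<in> sumset n A}"

(* O = k[[Gamma]] inside K = k((t)): Laurent series supported on Gamma *)
definition monomial_ring :: "'a::field itself \<Rightarrow> nat set \<Rightarrow> 'a fls set" where
  "monomial_ring _ G = {f. \<forall>n. fls_nth f n \<noteq> 0 \<longrightarrow> 0 \<le> n \<and> nat n \<in> G}"

(* omega: spanned by k[[t]] and the monomials t^(-l-1), l a gap *)
definition omega_mod :: "'a::field itself \<Rightarrow> nat set \<Rightarrow> 'a fls set" where
  "omega_mod _ G = {f. \<forall>n. fls_nth f n \<noteq> 0 \<longrightarrow> 0 \<le> n \<or> (\<exists>l\<in>gaps G. n = - int l - 1)}"

definition frac_prod :: "'a::field fls set \<Rightarrow> 'a fls set \<Rightarrow> 'a fls set" where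
  "frac_prod M N = {x. \<exists>(n::nat) a b. (\<forall>i<n. a i \<in> M \<and> b i \<in> N) \<and> x = (\<Sum>i<n. a i * b i)}"

fun frac_pow :: "'a::field fls set \<Rightarrow> 'a fls set \<Rightarrow> nat \<Rightarrow> 'a fls set" where
  "frac_pow R W 0 = R"
| "frac_pow R W (Suc k) = frac_prod W (frac_pow R W k)"

definition colon :: "'a::field fls set \<Rightarrow> 'a fls set \<Rightarrow> 'a fls set" where
  "colon R I = {x. \<forall>y\<in>I. x * y \<in> R}"

(* dim_k V/U for a k-subspace U of V: least number of vectors spanning V modulo U *)
definition quot_dim :: "'a::field fls set \<Rightarrow> 'a fls set \<Rightarrow> nat" where
  "quot_dim V U = (LEAST n::nat. \<exists>v. (\<forall>i<n. v i \<in> V) \<and>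
      (\<forall>x\<in>V. \<exists>c. \<exists>u\<in>U. x = (\<Sum>i<n. fls_const (c i) * v i) + u))"

definition d_inv :: "'a::field itself \<Rightarrow> nat set \<Rightarrow> nat \<Rightarrow> nat" where
  "d_inv T G k = quot_dim (monomial_ring T G)
      (colon (monomial_ring T G) (frac_pow (monomial_ring T G) (omega_mod T G) k))"

end

theory Submission
  imports Defs "HOL-Library.Set_Algebras"
begin

unbundle fps_syntax

text \<open>
  All the modules involved are monomial: \<open>\<O>\<close>, \<open>\<omega>\<close>, hence \<open>\<omega>\<^sup>k\<close> and \<open>\<O> :\<^sub>K \<omega>\<^sup>k\<close>, consist
  of the Laurent series supported on explicit sets of exponents, and the codimension of two such
  spaces is the number of exponents in which they differ.  So \<open>d\<^sub>k\<close> counts the \<open>c \<in> \<Gamma>\<close> with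
  \<open>c + S\<^sub>k \<notsubseteq> \<Gamma>\<close>, where \<open>S\<^sub>k\<close> is the support of \<open>\<omega>\<^sup>k\<close>.  With \<open>F\<close> the Frobenius number, these \<open>c\<close> are
  the elements of \<open>\<Gamma>\<close> below \<open>k(F+1)\<close> together with the \<open>y + k\<close>, \<open>y \<in> (k+1)L\<close>, \<open>y \<ge> kF\<close>.
  Multiplicity at least 3 makes 1 and 2 gaps, which forces \<open>(k+1)L\<close> to contain the whole
  interval \<open>[k+1, kF)\<close>; counting then gives the formula.  The argument works over any field.
\<close>

section \<open>Laurent series with prescribed support\<close>

definition fls_supported :: "int set \<Rightarrow> 'a::field fls set" where
  "fls_supported A = {f. \<forall>n. f $$ n \<noteq> 0 \<longrightarrow> n \<in> A}"

lemma fls_X_intpow_in_fls_supported: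
  "s \<in> A \<Longrightarrow> (fls_X_intpow s :: 'a::field fls) \<in> fls_supported A"
  by (auto simp: fls_supported_def)

lemma fls_supported_mono: "A \<subseteq> B \<Longrightarrow> fls_supported A \<subseteq> fls_supported B"
  by (auto simp: fls_supported_def)

lemma fls_supported_mult:
  fixes f g :: "'a::field fls"
  assumes f: "f \<in> fls_supported A" and g: "g \<in> fls_supported B"
  shows "f * g \<in> fls_supported (A + B)"
  unfolding fls_supported_def
proof safe
  fix n assume "(f * g) $$ n \<noteq> 0"
  hence "(\<Sum>i = fls_subdegree f..n - fls_subdegree g. f $$ i * g $$ (n - i)) \<noteq> 0"
    by (simp add: fls_times_nth(2))
  then obtain i where "f $$ i * g $$ (n - i) \<noteq> 0"
    by (meson sum.not_neutral_contains_not_neutral)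
  hence "i \<in> A" "n - i \<in> B" using f g by (auto simp: fls_supported_def)
  thus "n \<in> A + B" using set_plus_intro[of i A "n - i" B] by simp
qed

lemma fls_supported_sum:
  "(\<And>i. i \<in> I \<Longrightarrow> f i \<in> fls_supported A) \<Longrightarrow> (\<Sum>i\<in>I. f i) \<in> fls_supported A"
  by (induction I rule: infinite_finite_induct) (auto simp: fls_supported_def, metis add_0)

lemma frac_prod_subset_fls_supported:
  "M \<subseteq> fls_supported A \<Longrightarrow> N \<subseteq> fls_supported B \<Longrightarrow> frac_prod M N \<subseteq> fls_supported (A + B)"
  unfolding frac_prod_def by (auto intro!: fls_supported_sum fls_supported_mult)

lemma mult_mem_frac_prod: "x \<in> M \<Longrightarrow> y \<in> N \<Longrightarrow> x * y \<in> frac_prod M N"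
  unfolding frac_prod_def
  by (rule CollectI, rule exI[of _ 1], rule exI[of _ "\<lambda>_. x"], rule exI[of _ "\<lambda>_. y"]) simp

interpretation fls_vs: vector_space "(\<lambda>c f. fls_const c * f) :: 'a::field \<Rightarrow> 'a fls \<Rightarrow> 'a fls"
  by unfold_locales
    (simp_all add: distrib_left distrib_right mult.assoc
       flip: fls_plus_const fls_const_mult_const)

lemma fls_X_intpow_inj: "inj (fls_X_intpow :: int \<Rightarrow> 'a::field fls)"
  by (rule injI) (metis fls_subdegree_fls_X_intpow)

lemma fls_X_intpow_independent:
  "\<not> fls_vs.dependent (fls_X_intpow ` D :: 'a::field fls set)"
proof
  assume "fls_vs.dependent (fls_X_intpow ` D :: 'a fls set)"
  then obtain t u v0 where t: "finite t" "t \<subseteq> fls_X_intpow ` D"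
      "(\<Sum>v\<in>t. fls_const (u v) * v) = (0::'a fls)" and v0: "v0 \<in> t" "u v0 \<noteq> 0"
    unfolding fls_vs.dependent_explicit by blast
  from v0 t obtain d0 where d0: "v0 = fls_X_intpow d0" by blast
  have "(\<Sum>v\<in>t. fls_const (u v) * v) $$ d0 = (\<Sum>v\<in>t. u v * v $$ d0)"
    by (simp add: fls_nth_sum)
  also have "\<dots> = u v0 * v0 $$ d0 + (\<Sum>v\<in>t - {v0}. u v * v $$ d0)"
    using t v0 by (simp add: sum.remove)
  also have "(\<Sum>v\<in>t - {v0}. u v * v $$ d0) = 0"
  proof (intro sum.neutral ballI)
    fix v assume "v \<in> t - {v0}"
    then obtain d where "v = fls_X_intpow d" "d \<noteq> d0" using t d0 by blast
    thus "u v * v $$ d0 = 0" by simp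
  qed
  finally show False using t v0 d0 by simp
qed

definition fls_restrict :: "int set \<Rightarrow> 'a::field fls \<Rightarrow> 'a fls" where
  "fls_restrict D x = (\<Sum>d\<in>D. fls_const (x $$ d) * fls_X_intpow d)"

lemma fls_restrict_nth: "finite D \<Longrightarrow> fls_restrict D x $$ n = (if n \<in> D then x $$ n else 0)"
  unfolding fls_restrict_def by (simp add: fls_nth_sum if_distrib cong: if_cong)

lemma fls_restrict_linear_combination:
  fixes v :: "nat \<Rightarrow> 'a::field fls"
  assumes "finite D" "u \<in> fls_supported B" "D \<inter> B = {}"
  shows "fls_restrict D ((\<Sum>i<n. fls_const (c i) * v i) + u)
           = (\<Sum>i<n. fls_const (c i) * fls_restrict D (v i))"
proof -
  have "u $$ d = 0" if "d \<in> D" for d using assms that by (auto simp: fls_supported_def)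
  thus ?thesis using assms(1) by (auto simp: fls_eq_iff fls_restrict_nth fls_nth_sum)
qed

lemma quot_dim_fls_supported_spanning:
  assumes "finite (A - B)"
  shows "\<exists>v. (\<forall>i<card (A - B). v i \<in> (fls_supported A :: 'a::field fls set)) \<and>
           (\<forall>x\<in>fls_supported A. \<exists>c. \<exists>u\<in>fls_supported B.
              x = (\<Sum>i<card (A - B). fls_const (c i) * v i) + u)"
proof -
  obtain h where h: "bij_betw h {0..<card (A - B)} (A - B)"
    using ex_bij_betw_nat_finite[OF assms] by blast
  show ?thesis
  proof (intro exI[of _ "\<lambda>i. fls_X_intpow (h i)"] conjI allI impI ballI)
    fix i assume "i < card (A - B)"
    hence "h i \<in> A" using h by (auto simp: bij_betw_def)
    thus "fls_X_intpow (h i) \<in> (fls_supported A :: 'a fls set)"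
      by (rule fls_X_intpow_in_fls_supported)
  next
    fix x :: "'a fls" assume x: "x \<in> fls_supported A"
    have restrict: "(\<Sum>i<card (A - B). fls_const (x $$ h i) * fls_X_intpow (h i))
                      = fls_restrict (A - B) x"
      unfolding fls_restrict_def
      using sum.reindex_bij_betw[OF h, of "\<lambda>d. fls_const (x $$ d) * fls_X_intpow d"]
      by (simp add: lessThan_atLeast0)
    have "x - fls_restrict (A - B) x \<in> fls_supported B"
      using x assms by (auto simp: fls_supported_def fls_restrict_nth)
    then show "\<exists>c. \<exists>u\<in>fls_supported B.
                 x = (\<Sum>i<card (A - B). fls_const (c i) * fls_X_intpow (h i)) + u"
      by (intro exI[of _ "\<lambda>i. x $$ h i"] bexI[of _ "x - fls_restrict (A - B) x"])
        (simp_all add: restrict)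
  qed
qed

lemma quot_dim_fls_supported_lower_bound:
  fixes v :: "nat \<Rightarrow> 'a::field fls"
  assumes fin: "finite (A - B)"
    and span: "\<forall>x\<in>fls_supported A. \<exists>c. \<exists>u\<in>fls_supported B.
                 x = (\<Sum>i<n. fls_const (c i) * v i) + u"
  shows "card (A - B) \<le> n"
proof -
  txt \<open>Restricting to \<open>A - B\<close> kills \<open>fls_supported B\<close>, so the restricted \<open>v i\<close> span the
    independent monomials with exponents in \<open>A - B\<close>.\<close>
  define T where "T = (\<lambda>i. fls_restrict (A - B) (v i)) ` {..<n}"
  have span_T: "(fls_X_intpow ` (A - B) :: 'a fls set) \<subseteq> fls_vs.span T"
  proof
    fix y assume "y \<in> (fls_X_intpow ` (A - B) :: 'a fls set)"
    then obtain d where d: "d \<in> A - B" "y = fls_X_intpow d" by blast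
    hence "y \<in> fls_supported A" by (auto intro: fls_X_intpow_in_fls_supported)
    then obtain c u where u: "u \<in> fls_supported B" "y = (\<Sum>i<n. fls_const (c i) * v i) + u"
      using span by blast
    have "y = fls_restrict (A - B) y" using d fin by (simp add: fls_eq_iff fls_restrict_nth)
    also have "\<dots> = (\<Sum>i<n. fls_const (c i) * fls_restrict (A - B) (v i))"
      unfolding u(2) by (rule fls_restrict_linear_combination[OF fin u(1)]) auto
    also have "\<dots> \<in> fls_vs.span T"
      by (intro fls_vs.span_sum fls_vs.span_scale fls_vs.span_base) (auto simp: T_def)
    finally show "y \<in> fls_vs.span T" .
  qed
  have "card (fls_X_intpow ` (A - B) :: 'a fls set) \<le> card T"
    using fls_vs.independent_span_bound[OF _ fls_X_intpow_independent span_T]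
    by (simp add: T_def)
  also have "card T \<le> n" unfolding T_def using card_image_le by fastforce
  finally show ?thesis
    by (simp add: card_image inj_on_subset[OF fls_X_intpow_inj])
qed

lemma quot_dim_fls_supported:
  assumes "finite (A - B)"
  shows "quot_dim (fls_supported A :: 'a::field fls set) (fls_supported B) = card (A - B)"
  unfolding quot_dim_def
  using quot_dim_fls_supported_spanning[OF assms] quot_dim_fls_supported_lower_bound[OF assms]
  by (intro Least_equality) blast+

section \<open>The exponent sets of \<open>\<omega>\<^sup>k\<close> and \<open>\<O> :\<^sub>K \<omega>\<^sup>k\<close>\<close>

definition omega_exps :: "nat set \<Rightarrow> int set" where
  "omega_exps G = {n. 0 \<le> n \<or> (\<exists>l\<in>gaps G. n = - int l - 1)}"

fun omega_pow_exps :: "nat set \<Rightarrow> nat \<Rightarrow> int set" where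
  "omega_pow_exps G 0 = int ` G"
| "omega_pow_exps G (Suc k) = omega_exps G + omega_pow_exps G k"

definition colon_exps :: "nat set \<Rightarrow> nat \<Rightarrow> int set" where
  "colon_exps G k = {c. \<forall>s\<in>omega_pow_exps G k. c + s \<in> int ` G}"

lemma monomial_ring_eq: "monomial_ring TYPE('a::field) G = fls_supported (int ` G)"
  unfolding monomial_ring_def fls_supported_def
  by (auto simp: image_iff) (metis nat_0_le nat_int)+

lemma omega_mod_eq: "omega_mod TYPE('a::field) G = fls_supported (omega_exps G)"
  unfolding omega_mod_def fls_supported_def omega_exps_def by auto

lemma frac_pow_subset_fls_supported:
  "frac_pow (fls_supported (int ` G)) (fls_supported (omega_exps G)) k
     \<subseteq> (fls_supported (omega_pow_exps G k) :: 'a::field fls set)"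
  by (induction k) (simp_all add: frac_prod_subset_fls_supported)

lemma fls_X_intpow_in_frac_pow:
  "s \<in> omega_pow_exps G k \<Longrightarrow>
     (fls_X_intpow s :: 'a::field fls) \<in> frac_pow (fls_supported (int ` G)) (fls_supported (omega_exps G)) k"
proof (induction k arbitrary: s)
  case 0
  then show ?case by (simp add: fls_X_intpow_in_fls_supported)
next
  case (Suc k)
  then obtain e s' where es: "s = e + s'" "e \<in> omega_exps G" "s' \<in> omega_pow_exps G k"
    by (auto elim: set_plus_elim)
  have "(fls_X_intpow e :: 'a fls) * fls_X_intpow s'
          \<in> frac_pow (fls_supported (int ` G)) (fls_supported (omega_exps G)) (Suc k)"
    using es Suc.IH by (auto intro: mult_mem_frac_prod fls_X_intpow_in_fls_supported)
  then show ?case by (simp add: es(1) fls_X_intpow_times_fls_X_intpow)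
qed

lemma colon_frac_pow_eq:
  "colon (fls_supported (int ` G)) (frac_pow (fls_supported (int ` G)) (fls_supported (omega_exps G)) k)
     = (fls_supported (colon_exps G k) :: 'a::field fls set)"
    (is "colon ?O ?W = _")
proof (intro equalityI subsetI)
  fix x :: "'a fls" assume x: "x \<in> colon ?O ?W"
  show "x \<in> fls_supported (colon_exps G k)"
    unfolding fls_supported_def colon_exps_def
  proof safe
    fix c s assume c: "x $$ c \<noteq> 0" and s: "s \<in> omega_pow_exps G k"
    have "x * fls_X_intpow s \<in> ?O"
      using x fls_X_intpow_in_frac_pow[OF s] by (auto simp: colon_def)
    moreover have "(x * fls_X_intpow s) $$ (c + s) = x $$ c"
      by (simp add: fls_X_intpow_times_conv_shift(2))
    ultimately show "c + s \<in> int ` G" using c by (auto simp: fls_supported_def)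
  qed
next
  fix x :: "'a fls" assume x: "x \<in> fls_supported (colon_exps G k)"
  have supp: "colon_exps G k + omega_pow_exps G k \<subseteq> int ` G"
    by (auto simp: colon_exps_def elim: set_plus_elim)
  show "x \<in> colon ?O ?W"
    unfolding colon_def
  proof safe
    fix y :: "'a fls" assume "y \<in> ?W"
    hence "y \<in> fls_supported (omega_pow_exps G k)"
      using frac_pow_subset_fls_supported by blast
    hence "x * y \<in> fls_supported (colon_exps G k + omega_pow_exps G k)"
      using x by (rule fls_supported_mult[rotated])
    thus "x * y \<in> ?O" using supp fls_supported_mono by blast
  qed
qed

lemma d_inv_eq_card:
  "finite (int ` G - colon_exps G k) \<Longrightarrow>
     d_inv TYPE('a::field) G k = card (int ` G - colon_exps G k)"
  unfolding d_inv_def monomial_ring_eq omega_mod_eq colon_frac_pow_eq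
  by (rule quot_dim_fls_supported)

section \<open>Numerical semigroups\<close>

lemma sumset_SucI: "a \<in> A \<Longrightarrow> b \<in> sumset n A \<Longrightarrow> a + b \<in> sumset (Suc n) A"
  by auto

lemma sumset_2I: "a \<in> A \<Longrightarrow> b \<in> A \<Longrightarrow> a + b \<in> sumset 2 A"
  by (simp add: numeral_2_eq_2) force

locale num_semigroup =
  fixes G :: "nat set"
  assumes numerical_semigroup: "numerical_semigroup G"
begin

abbreviation "L \<equiv> gaps G"
abbreviation "m \<equiv> multiplicity G"

lemma zero_mem: "0 \<in> G"
  using numerical_semigroup by (simp add: numerical_semigroup_def)

lemma add_mem: "a \<in> G \<Longrightarrow> b \<in> G \<Longrightarrow> a + b \<in> G"
  using numerical_semigroup by (simp add: numerical_semigroup_def)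

lemma finite_gaps: "finite L"
  using numerical_semigroup by (simp add: numerical_semigroup_def gaps_def)

lemma gap_iff: "x \<in> L \<longleftrightarrow> x \<notin> G"
  by (simp add: gaps_def)

lemma gap_pos: "l \<in> L \<Longrightarrow> 1 \<le> l"
  using zero_mem gap_iff by (cases l) auto

lemma multiplicity_mem: "m \<in> G" and multiplicity_pos: "0 < m"
proof -
  obtain b where "L \<subseteq> {..<b}" using finite_nat_bounded[OF finite_gaps] by blast
  hence "b + 1 \<in> G \<and> 0 < b + 1" using gap_iff by auto
  hence "m \<in> G \<and> 0 < m" unfolding multiplicity_def by (rule LeastI)
  thus "m \<in> G" "0 < m" by auto
qed

lemma gap_if_less_multiplicity: "0 < y \<Longrightarrow> y < m \<Longrightarrow> y \<in> L"
  using not_less_Least[of y "\<lambda>m. m \<in> G \<and> m > 0"] gap_iff unfolding multiplicity_def by auto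

lemma mem_if_run:
  assumes run: "\<forall>j<m. a + j \<in> G" and "a \<le> y"
  shows "y \<in> G"
  using assms(2)
proof (induction y rule: less_induct)
  case (less y)
  show ?case
  proof (cases "y < a + m")
    case True
    then show ?thesis using run[rule_format, of "y - a"] less.prems by auto
  next
    case False
    hence "y - m \<in> G" using less multiplicity_pos by auto
    then show ?thesis using add_mem[OF _ multiplicity_mem, of "y - m"] False by auto
  qed
qed

text \<open>Going down from \<open>a\<close> in steps of \<open>m\<close> one must leave \<open>\<Gamma>\<close> before reaching \<open>0\<close>.\<close>

lemma gap_below_nondivisible:
  "a \<in> G \<Longrightarrow> \<not> m dvd a \<Longrightarrow> \<exists>g\<in>L. g < a \<and> g + m \<in> G"
proof (induction a rule: less_induct)
  case (less a)
  have "0 < a" using less.prems by (cases a) auto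
  hence a_ge: "m \<le> a" using gap_if_less_multiplicity[of a] less.prems gap_iff by force
  show ?case
  proof (cases "a - m \<in> L")
    case True
    then show ?thesis using a_ge multiplicity_pos less.prems by (intro bexI[of _ "a - m"]) auto
  next
    case False
    moreover have "\<not> m dvd (a - m)"
      using less.prems a_ge by (metis dvd_diff_nat dvd_refl le_add_diff_inverse2 dvd_add)
    ultimately obtain g where "g \<in> L" "g < a - m" "g + m \<in> G"
      using less.IH[of "a - m"] multiplicity_pos \<open>0 < a\<close> gap_iff by auto
    then show ?thesis by (intro bexI[of _ g]) auto
  qed
qed

lemma gap_sum_in_omega_pow_exps:
  "\<sigma> \<in> sumset j L \<Longrightarrow> - int \<sigma> - int j \<in> omega_pow_exps G j"
proof (induction j arbitrary: \<sigma>)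
  case 0
  then show ?case using zero_mem by simp
next
  case (Suc j)
  then obtain l b where lb: "\<sigma> = l + b" "l \<in> L" "b \<in> sumset j L" by auto
  have "- int l - 1 \<in> omega_exps G" using lb by (auto simp: omega_exps_def)
  hence "(- int l - 1) + (- int b - int j) \<in> omega_pow_exps G (Suc j)"
    using Suc.IH lb by (auto intro: set_plus_intro)
  moreover have "- int \<sigma> - int (Suc j) = (- int l - 1) + (- int b - int j)" using lb by simp
  ultimately show ?case by (simp only: omega_pow_exps.simps)
qed

end

locale num_semigroup_mult3 = num_semigroup +
  assumes multiplicity_ge_3: "multiplicity G \<ge> 3"
begin

definition frobenius :: nat where
  "frobenius = Max L"

abbreviation "F \<equiv> frobenius"

lemma one_gap: "1 \<in> L" and two_gap: "2 \<in> L"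
  using gap_if_less_multiplicity multiplicity_ge_3 by auto

lemma frobenius_gap: "F \<in> L"
  unfolding frobenius_def using finite_gaps one_gap by (intro Max_in) auto

lemma gap_le_frobenius: "l \<in> L \<Longrightarrow> l \<le> F"
  unfolding frobenius_def using finite_gaps by simp

lemma mem_if_gt_frobenius: "F < y \<Longrightarrow> y \<in> G"
  using gap_le_frobenius gap_iff by force

lemma frobenius_ge_2: "2 \<le> F"
  using gap_le_frobenius two_gap by simp

lemma frobenius_less_run: "\<forall>j<m. a + j \<in> G \<Longrightarrow> F < a"
  using mem_if_run[of a F] frobenius_gap gap_iff by force

text \<open>
  If \<open>2 \<le> x < F\<close> were not a sum of two gaps, then \<open>x - j \<in> \<Gamma>\<close> for all gaps \<open>j < x\<close>, in
  particular for \<open>0 < j < m\<close>; adding \<open>m\<close> gives a run \<open>x+1, \<dots>, x+m\<close> inside \<open>\<Gamma>\<close>, contradicting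
  \<open>x < F\<close>.  Only \<open>x + m\<close> needs more: it is \<open>(x - g) + (g + m)\<close> for a gap \<open>g\<close> with \<open>g + m \<in> \<Gamma>\<close>,
  found below whichever of \<open>x-1, x-2\<close> is not a multiple of \<open>m\<close>.
\<close>

lemma two_gap_sums_interval:
  assumes "2 \<le> x" "x < F"
  shows "x \<in> sumset 2 L"
proof (rule ccontr)
  assume not_sum: "x \<notin> sumset 2 L"
  have complement: "x - l \<in> G" if "l \<in> L" "l < x" for l
    using sumset_2I[OF that(1), of "x - l"] not_sum that gap_iff by auto
  have x_gt: "m < x"
  proof (rule ccontr)
    assume "\<not> m < x"
    hence "x - 1 \<in> L" using gap_if_less_multiplicity[of "x - 1"] assms by auto
    thus False using complement[OF one_gap] gap_iff assms by auto
  qed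
  have below: "x - j \<in> G" if "0 < j" "j < m" for j
    using complement gap_if_less_multiplicity that x_gt by simp
  have "\<not> (m dvd (x - 1) \<and> m dvd (x - 2))"
  proof
    assume "m dvd (x - 1) \<and> m dvd (x - 2)"
    hence "m dvd (x - 1) - (x - 2)" using dvd_diff_nat by blast
    moreover have "(x - 1) - (x - 2) = 1" using assms by auto
    ultimately show False using multiplicity_ge_3 by simp
  qed
  moreover have "x - 1 \<in> G" "x - 2 \<in> G" using below multiplicity_ge_3 by auto
  ultimately obtain a where a: "a \<in> G" "\<not> m dvd a" "a < x"
    using x_gt by (metis diff_less zero_less_numeral zero_less_one less_trans multiplicity_pos)
  obtain g where g: "g \<in> L" "g < a" "g + m \<in> G"
    using gap_below_nondivisible[OF a(1,2)] by blast
  have "\<forall>j<m. (x + 1) + j \<in> G"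
  proof (intro allI impI)
    fix j assume j: "j < m"
    show "(x + 1) + j \<in> G"
    proof (cases "j = m - 1")
      case True
      have "(x + 1) + j = (x - g) + (g + m)" using True g a multiplicity_pos by arith
      also have "\<dots> \<in> G" by (rule add_mem[OF complement]) (use g a in auto)
      finally show ?thesis .
    next
      case False
      have "(x + 1) + j = (x - (m - 1 - j)) + m" using x_gt j False by arith
      also have "\<dots> \<in> G" using j False by (intro add_mem below multiplicity_mem) auto
      finally show ?thesis .
    qed
  qed
  hence "F < x + 1" by (rule frobenius_less_run)
  thus False using assms by arith
qed

lemma sumset_gaps_bounds: "x \<in> sumset n L \<Longrightarrow> n \<le> x \<and> x \<le> n * F"
proof (induction n arbitrary: x)
  case 0
  then show ?case by simp
next
  case (Suc n)
  then obtain a b where "x = a + b" "a \<in> L" "b \<in> sumset n L" by auto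
  with Suc.IH[of b] gap_pos[of a] gap_le_frobenius[of a] show ?case by auto
qed

lemma mult_frobenius_in_sumset: "n * F \<in> sumset n L"
  by (induction n) (simp, simp del: sumset.simps add: sumset_SucI frobenius_gap)

lemma finite_sumset_gaps: "finite (sumset n L)"
  by (rule finite_subset[of _ "{..n * F}"]) (auto dest: sumset_gaps_bounds)

lemma sumset_gaps_low_interval: "1 \<le> n \<Longrightarrow> n \<le> x \<Longrightarrow> x \<le> 2 * n \<Longrightarrow> x \<in> sumset n L"
proof (induction n arbitrary: x rule: nat_induct_at_least)
  case base
  then have "x = 1 \<or> x = 2" by auto
  then show ?case using one_gap two_gap by auto
next
  case (Suc n)
  show ?case
  proof (cases "x \<le> 2 * n + 1")
    case True
    have "x = 1 + (x - 1)" using Suc by arith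
    also have "\<dots> \<in> sumset (Suc n) L" using Suc True by (intro sumset_SucI one_gap) auto
    finally show ?thesis .
  next
    case False
    have "x = 2 + (x - 2)" using False by arith
    also have "\<dots> \<in> sumset (Suc n) L" using Suc False by (intro sumset_SucI two_gap) auto
    finally show ?thesis .
  qed
qed

lemma sumset_gaps_interval: "1 \<le> k \<Longrightarrow> {k + 1..<k * F} \<subseteq> sumset (Suc k) L"
proof (induction k rule: nat_induct_at_least)
  case base
  then show ?case using two_gap_sums_interval by (auto simp: numeral_2_eq_2)
next
  case (Suc k)
  show ?case
  proof
    fix x assume x: "x \<in> {Suc k + 1..<Suc k * F}"
    consider "x \<le> 2 * Suc (Suc k)" | "2 * Suc (Suc k) < x" "x \<le> k * F"
      | "2 * Suc (Suc k) < x" "x = k * F + 1" | "k * F + 2 \<le> x"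
      by linarith
    then show "x \<in> sumset (Suc (Suc k)) L"
    proof cases
      case 1
      then show ?thesis using x by (intro sumset_gaps_low_interval) auto
    next
      case 2
      have "x = 1 + (x - 1)" using 2 by arith
      also have "\<dots> \<in> sumset (Suc (Suc k)) L"
        using 2 x by (intro sumset_SucI one_gap subsetD[OF Suc.IH]) auto
      finally show ?thesis .
    next
      case 3
      have "x = 2 + (x - 2)" using 3 by arith
      also have "\<dots> \<in> sumset (Suc (Suc k)) L"
        using 3 x Suc.hyps by (intro sumset_SucI two_gap subsetD[OF Suc.IH]) auto
      finally show ?thesis .
    next
      case 4
      have "x - k * F \<in> sumset 2 L" using 4 x by (intro two_gap_sums_interval) auto
      then obtain l1 l2 where l: "x - k * F = l1 + l2" "l1 \<in> L" "l2 \<in> L"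
        by (auto simp: numeral_2_eq_2)
      have "x = l1 + (l2 + k * F)" using l 4 by arith
      also have "\<dots> \<in> sumset (Suc (Suc k)) L"
        using l by (intro sumset_SucI mult_frobenius_in_sumset)
      finally show ?thesis .
    qed
  qed
qed

lemma omega_pow_exps_contains_ray:
  "- int j * (int F + 1) \<le> s \<Longrightarrow> s \<in> omega_pow_exps G (Suc j)"
proof (induction j arbitrary: s)
  case 0
  hence "s \<in> omega_exps G" by (simp add: omega_exps_def)
  then show ?case using zero_mem set_plus_intro[of s "omega_exps G" 0 "int ` G"] by simp
next
  case (Suc j)
  have "- int F - 1 \<in> omega_exps G" using frobenius_gap by (auto simp: omega_exps_def)
  moreover have "s + int F + 1 \<in> omega_pow_exps G (Suc j)"
    using Suc by (intro Suc.IH) (simp add: algebra_simps)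
  ultimately have "(- int F - 1) + (s + int F + 1) \<in> omega_pow_exps G (Suc (Suc j))"
    by (simp only: omega_pow_exps.simps(2) set_plus_intro)
  then show ?case by simp
qed

lemma omega_pow_exps_cases:
  "s \<in> omega_pow_exps G k \<Longrightarrow>
     (\<exists>\<sigma>\<in>sumset k L. \<exists>\<gamma>\<in>G. s = int \<gamma> - int \<sigma> - int k) \<or> - (int k - 1) * (int F + 1) \<le> s"
proof (induction k arbitrary: s)
  case 0
  then show ?case by auto
next
  case (Suc k)
  then obtain e s' where es: "s = e + s'" "e \<in> omega_exps G" "s' \<in> omega_pow_exps G k"
    by (auto elim: set_plus_elim)
  have e_lower: "- (int F + 1) \<le> e"
    using es(2) gap_le_frobenius by (force simp: omega_exps_def)
  from Suc.IH[OF es(3)] show ?case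
  proof
    assume "\<exists>\<sigma>\<in>sumset k L. \<exists>\<gamma>\<in>G. s' = int \<gamma> - int \<sigma> - int k"
    then obtain \<sigma> \<gamma> where \<sigma>\<gamma>: "\<sigma> \<in> sumset k L" "\<gamma> \<in> G" "s' = int \<gamma> - int \<sigma> - int k"
      by blast
    consider "0 \<le> e" | l where "l \<in> L" "e = - int l - 1"
      using es(2) by (auto simp: omega_exps_def)
    then show ?thesis
    proof cases
      case 1
      have "int \<sigma> \<le> int k * int F" using sumset_gaps_bounds[OF \<sigma>\<gamma>(1)] of_nat_mono by fastforce
      thus ?thesis using 1 es(1) \<sigma>\<gamma>(3) by (simp add: algebra_simps)
    next
      case 2
      have "l + \<sigma> \<in> sumset (Suc k) L" using 2(1) \<sigma>\<gamma>(1) by (rule sumset_SucI)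
      moreover have "s = int \<gamma> - int (l + \<sigma>) - int (Suc k)" using 2 es(1) \<sigma>\<gamma>(3) by simp
      ultimately show ?thesis using \<sigma>\<gamma>(2) by blast
    qed
  next
    assume "- (int k - 1) * (int F + 1) \<le> s'"
    thus ?thesis using e_lower es(1) by (simp add: algebra_simps)
  qed
qed

lemma colon_exps_lower_bound:
  assumes "1 \<le> k" "int c \<in> colon_exps G k"
  shows "k * (F + 1) \<le> c"
proof (rule ccontr)
  assume "\<not> k * (F + 1) \<le> c"
  hence "int (c + 1) \<le> int (k * (F + 1))" by (intro of_nat_mono) simp
  hence "- int (k - 1) * (int F + 1) \<le> int F - int c"
    using assms(1) by (simp add: of_nat_diff algebra_simps)
  hence "int F - int c \<in> omega_pow_exps G (Suc (k - 1))" by (rule omega_pow_exps_contains_ray)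
  moreover have "k = Suc (k - 1)" using assms(1) by simp
  ultimately have "int c + (int F - int c) \<in> int ` G"
    using assms(2) unfolding colon_exps_def by (metis (no_types, lifting) mem_Collect_eq)
  thus False using frobenius_gap gap_iff by (auto simp: image_iff)
qed

lemma colon_exps_iff:
  assumes "1 \<le> k"
  shows "int c \<in> colon_exps G k \<longleftrightarrow> k * (F + 1) \<le> c \<and> (\<forall>\<sigma>\<in>sumset k L. c - \<sigma> - k \<in> G)"
proof
  assume c: "int c \<in> colon_exps G k"
  have "c - \<sigma> - k \<in> G" if "\<sigma> \<in> sumset k L" for \<sigma>
  proof -
    have "int c + (- int \<sigma> - int k) \<in> int ` G"
      using c gap_sum_in_omega_pow_exps[OF that] by (auto simp: colon_exps_def)
    then obtain \<gamma> where "\<gamma> \<in> G" "int c + (- int \<sigma> - int k) = int \<gamma>" by blast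
    moreover from this have "c - \<sigma> - k = \<gamma>" by linarith
    ultimately show ?thesis by simp
  qed
  thus "k * (F + 1) \<le> c \<and> (\<forall>\<sigma>\<in>sumset k L. c - \<sigma> - k \<in> G)"
    using colon_exps_lower_bound[OF assms c] by blast
next
  assume c: "k * (F + 1) \<le> c \<and> (\<forall>\<sigma>\<in>sumset k L. c - \<sigma> - k \<in> G)"
  hence c_lower: "int k * (int F + 1) \<le> int c" by (metis of_nat_1 of_nat_add of_nat_mono of_nat_mult)
  show "int c \<in> colon_exps G k"
    unfolding colon_exps_def
  proof safe
    fix s assume "s \<in> omega_pow_exps G k"
    from omega_pow_exps_cases[OF this] show "int c + s \<in> int ` G"
    proof
      assume "\<exists>\<sigma>\<in>sumset k L. \<exists>\<gamma>\<in>G. s = int \<gamma> - int \<sigma> - int k"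
      then obtain \<sigma> \<gamma> where \<sigma>\<gamma>: "\<sigma> \<in> sumset k L" "\<gamma> \<in> G" "s = int \<gamma> - int \<sigma> - int k"
        by blast
      have "\<sigma> + k \<le> c" using sumset_gaps_bounds[OF \<sigma>\<gamma>(1)] c by (simp add: algebra_simps)
      hence "int c + s = int ((c - \<sigma> - k) + \<gamma>)" using \<sigma>\<gamma>(3) by simp
      moreover have "(c - \<sigma> - k) + \<gamma> \<in> G" using add_mem c \<sigma>\<gamma> by blast
      ultimately show ?thesis by blast
    next
      assume "- (int k - 1) * (int F + 1) \<le> s"
      hence "int F < int c + s" using c_lower by (simp add: algebra_simps)
      hence "nat (int c + s) \<in> G" by (intro mem_if_gt_frobenius) linarith
      moreover have "int c + s = int (nat (int c + s))" using \<open>int F < int c + s\<close> by simp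
      ultimately show ?thesis by (metis image_eqI)
    qed
  qed
qed

definition defect_exps :: "nat \<Rightarrow> nat set" where
  "defect_exps k = ({..<k * (F + 1)} - L) \<union> (\<lambda>y. y + k) ` {y \<in> sumset (Suc k) L. k * F \<le> y}"

lemma mem_defect_exps_iff:
  assumes "1 \<le> k"
  shows "c \<in> defect_exps k \<longleftrightarrow> c \<in> G \<and> \<not> (k * (F + 1) \<le> c \<and> (\<forall>\<sigma>\<in>sumset k L. c - \<sigma> - k \<in> G))"
proof
  assume "c \<in> defect_exps k"
  then consider "c < k * (F + 1)" "c \<notin> L"
    | y where "y \<in> sumset (Suc k) L" "k * F \<le> y" "c = y + k"
    unfolding defect_exps_def by blast
  then show "c \<in> G \<and> \<not> (k * (F + 1) \<le> c \<and> (\<forall>\<sigma>\<in>sumset k L. c - \<sigma> - k \<in> G))"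
  proof cases
    case 1
    then show ?thesis using gap_iff by auto
  next
    case (2 y)
    then obtain l \<sigma> where l\<sigma>: "y = l + \<sigma>" "l \<in> L" "\<sigma> \<in> sumset k L" by auto
    have "F \<le> k * F" using assms by simp
    hence "c \<in> G" using 2 assms by (intro mem_if_gt_frobenius) linarith
    moreover have "c - \<sigma> - k = l" using l\<sigma> 2 by simp
    ultimately show ?thesis using l\<sigma> gap_iff by auto
  qed
next
  assume c: "c \<in> G \<and> \<not> (k * (F + 1) \<le> c \<and> (\<forall>\<sigma>\<in>sumset k L. c - \<sigma> - k \<in> G))"
  show "c \<in> defect_exps k"
  proof (cases "c < k * (F + 1)")
    case True
    then show ?thesis using c gap_iff by (simp add: defect_exps_def)
  next
    case False
    then obtain \<sigma> where \<sigma>: "\<sigma> \<in> sumset k L" "c - \<sigma> - k \<in> L" using c gap_iff by auto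
    have "\<sigma> \<le> k * F" using sumset_gaps_bounds[OF \<sigma>(1)] by simp
    hence "c - k = (c - \<sigma> - k) + \<sigma>" "k * F \<le> c - k" "c = (c - k) + k"
      using False by (simp_all add: algebra_simps)
    moreover have "(c - \<sigma> - k) + \<sigma> \<in> sumset (Suc k) L" using \<sigma> by (intro sumset_SucI)
    ultimately show ?thesis
      unfolding defect_exps_def by (metis (mono_tags, lifting) UnI2 image_eqI mem_Collect_eq)
  qed
qed

lemma int_image_diff_colon_exps:
  "1 \<le> k \<Longrightarrow> int ` G - colon_exps G k = int ` defect_exps k"
  using colon_exps_iff mem_defect_exps_iff by auto

lemma card_defect_exps:
  assumes k: "1 \<le> k"
  shows "int (card (defect_exps k)) = int (card (sumset (Suc k) L)) + 2 * int k + 1 - int (card L)"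
proof -
  define X where "X = sumset (Suc k) L"
  define H where "H = {y \<in> X. k * F \<le> y}"
  have kF: "k + 1 \<le> k * F" using frobenius_ge_2 k mult_le_mono2[of 2 F k] by linarith
  have "L \<subseteq> {..<k * (F + 1)}"
  proof
    fix l assume "l \<in> L"
    hence "l \<le> F" by (rule gap_le_frobenius)
    also have "F < 1 * (F + 1)" by simp
    also have "\<dots> \<le> k * (F + 1)" using k by (intro mult_right_mono) auto
    finally show "l \<in> {..<k * (F + 1)}" by simp
  qed
  hence card_low: "card ({..<k * (F + 1)} - L) = k * (F + 1) - card L"
    and card_L: "card L \<le> k * (F + 1)"
    by (simp_all add: card_Diff_subset finite_gaps card_mono[of "{..<k * (F + 1)}", simplified])
  have X_eq: "X = {k + 1..<k * F} \<union> H"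
    using sumset_gaps_interval[OF k] sumset_gaps_bounds[of _ "Suc k"]
    unfolding X_def H_def by fastforce
  have "finite H" unfolding H_def X_def using finite_sumset_gaps by (rule finite_subset[rotated]) blast
  moreover have "{k + 1..<k * F} \<inter> H = {}" by (auto simp: H_def)
  ultimately have "card X = card {k + 1..<k * F} + card H"
    unfolding X_eq by (intro card_Un_disjoint) auto
  hence card_X: "card X = (k * F - (k + 1)) + card H" by simp
  have "defect_exps k = ({..<k * (F + 1)} - L) \<union> (\<lambda>y. y + k) ` H"
    unfolding defect_exps_def H_def X_def ..
  also have "card \<dots> = card ({..<k * (F + 1)} - L) + card ((\<lambda>y. y + k) ` H)"
    using \<open>finite H\<close> by (intro card_Un_disjoint) (auto simp: H_def algebra_simps)
  also have "card ((\<lambda>y. y + k) ` H) = card H" by (simp add: card_image)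
  finally show ?thesis
    using card_low card_L card_X kF unfolding X_def by (simp add: of_nat_diff algebra_simps)
qed

lemma finite_defect_exps: "finite (defect_exps k)"
  using finite_sumset_gaps[of "Suc k"] by (simp del: sumset.simps add: defect_exps_def)

end

theorem mainTheorem5:
  fixes G :: "nat set" and k :: nat
  assumes "alg_closed TYPE('a::field_char_0)"
    and "numerical_semigroup G"
    and "multiplicity G \<ge> 3"
    and "k \<ge> 1"
  shows "int (d_inv TYPE('a) G k)
           = int (card (sumset (k + 1) (gaps G))) + (2 * int k + 1) - int (card (gaps G))
     \<and> (int (d_inv TYPE('a) G k) > 2 * int k * int (card (gaps G))
          \<longleftrightarrow> int (card (sumset (k + 1) (gaps G))) > (2 * int k + 1) * (int (card (gaps G)) - 1))"
proof -
  interpret num_semigroup_mult3 G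
    using assms(2,3) by unfold_locales
  have diff: "int ` G - colon_exps G k = int ` defect_exps k"
    using assms(4) by (rule int_image_diff_colon_exps)
  have "d_inv TYPE('a) G k = card (int ` G - colon_exps G k)"
    by (rule d_inv_eq_card) (simp add: diff finite_defect_exps)
  also have "\<dots> = card (defect_exps k)" by (simp add: diff card_image)
  finally have d_inv: "int (d_inv TYPE('a) G k)
      = int (card (sumset (k + 1) (gaps G))) + (2 * int k + 1) - int (card (gaps G))"
    using card_defect_exps[OF assms(4)] by simp
  moreover have "(2 * int k + 1) * (int (card (gaps G)) - 1)
      = 2 * int k * int (card (gaps G)) + int (card (gaps G)) - (2 * int k + 1)"
    by (simp add: algebra_simps)
  ultimately show ?thesis by linarith
qed

end
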